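(* For $m=7$ and for every integer $m\ge 10$ we have $\ell_m<(m-\ell_m)(m-\ell_m+1)$.
   Context: For integers $m\ge2$ and real $\ell\in(0,m]$, $f_m(\ell)=\frac1{\ell}\left(\binom{\ell}{2}+\binom{m-\ell+1}{2}\right)=\ell+\frac{m^2+m}{2\ell}-m-1$. Let $\lambda_m=\frac{\sqrt{2m^2+2m}}{2}$, and let $\ell_m\in\{\lfloor\lambda_m\rfloor,\lceil\lambda_m\rceil\}$ be such that $f_m(\ell_m)=\min\{f_m(\lfloor\lambda_m\rfloor),f_m(\lceil\lambda_m\rceil)\}$, with the convention that if $\lfloor\lambda_m\rfloor\ne\lceil\lambda_m\rceil$ and $f_m(\lfloor\lambda_m\rfloor)=f_m(\lceil\lambda_m\rceil)$, then $\ell_m=\lfloor\lambda_m\rfloor$. *)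

theory Defs
  imports Complex_Main
begin

definition f_m :: "nat \<Rightarrow> real \<Rightarrow> real" where
  "f_m m l = l + (real m ^ 2 + real m) / (2 * l) - real m - 1"

definition lambda_m :: "nat \<Rightarrow> real" where
  "lambda_m m = sqrt (2 * real m ^ 2 + 2 * real m) / 2"

definition ell_m :: "nat \<Rightarrow> int" where
  "ell_m m = (let a = \<lfloor>lambda_m m\<rfloor>; b = \<lceil>lambda_m m\<rceil> in
     if f_m m (of_int a) \<le> f_m m (of_int b) then a else b)"

end

theory Submission
  imports Defs
begin

text \<open>Since \<open>\<lambda>\<^sub>m\<^sup>2 = (m\<^sup>2 + m)/2\<close>, we have \<open>\<ell>\<^sub>m < \<lambda>\<^sub>m + 1 \<approx> m/\<surd>2\<close>, so
  \<open>k = m - \<ell>\<^sub>m\<close> is roughly \<open>0.29 m\<close> and \<open>k (k + 1)\<close> beats \<open>\<ell>\<^sub>m\<close> once \<open>k \<ge> 3\<close>;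
  a rational upper bound for \<open>1/\<surd>2\<close> makes this explicit for \<open>m \<ge> 12\<close>.
  For \<open>m \<in> {7, 10, 11}\<close> the value of \<open>\<ell>\<^sub>m\<close> is computed exactly.\<close>

lemma lambda_m_squared: "(lambda_m m)\<^sup>2 = (real m ^ 2 + real m) / 2"
  unfolding lambda_m_def by (simp add: power_divide)

text \<open>\<open>99/70\<close> is a convergent of \<open>\<surd>2\<close> from above.\<close>

lemma lambda_m_upper_bound: "140 * lambda_m m \<le> 99 * real m + 50"
proof (rule power2_le_imp_le)
  have "(140 * lambda_m m)\<^sup>2 = 9800 * (real m ^ 2 + real m)"
    by (simp add: power_mult_distrib lambda_m_squared)
  also have "\<dots> \<le> (99 * real m + 50)\<^sup>2"
    by (simp add: power2_eq_square algebra_simps)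
  finally show "(140 * lambda_m m)\<^sup>2 \<le> (99 * real m + 50)\<^sup>2" .
qed simp

lemma ell_m_floor_or_ceiling: "ell_m m = \<lfloor>lambda_m m\<rfloor> \<or> ell_m m = \<lceil>lambda_m m\<rceil>"
  unfolding ell_m_def Let_def by auto

lemma ell_m_less_lambda_m_plus_one: "real_of_int (ell_m m) < lambda_m m + 1"
  using ell_m_floor_or_ceiling[of m] by linarith

lemma ell_m_upper_bound: "140 * ell_m m < 99 * int m + 190"
  using ell_m_less_lambda_m_plus_one[of m] lambda_m_upper_bound[of m] by linarith

lemma less_times_succ_of_linear_bound:
  fixes l m :: int
  assumes "140 * l < 99 * m + 190" and "m \<ge> 12"
  shows "l < (m - l) * (m - l + 1)"
proof -
  define k where "k = m - l"
  have "k \<ge> 3"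
    using assms unfolding k_def by linarith
  then have "k * (k + 1) \<ge> 4 * k" and "k * (k + 1) \<ge> 12"
    using mult_mono[of 3 k 4 "k + 1"] by (auto simp: algebra_simps)
  moreover have "l < 4 * k" if "m \<ge> 15"
    using assms that unfolding k_def right_diff_distrib by linarith
  moreover have "l < 12" if "m \<le> 14"
    using assms that by linarith
  ultimately show ?thesis
    unfolding k_def[symmetric] by linarith
qed

lemma lambda_m_between:
  assumes "4 * n\<^sup>2 < 2 * m\<^sup>2 + 2 * m" and "2 * m\<^sup>2 + 2 * m < 4 * (n + 1)\<^sup>2"
  shows "real n < lambda_m m" and "lambda_m m < real n + 1"
proof -
  have "real (4 * n\<^sup>2) < real (2 * m\<^sup>2 + 2 * m)"
    using assms(1) by (simp only: of_nat_less_iff)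
  then have "(2 * real n)\<^sup>2 < 2 * real m ^ 2 + 2 * real m"
    by (simp add: power_mult_distrib)
  then have "2 * real n < sqrt (2 * real m ^ 2 + 2 * real m)"
    by (rule real_less_rsqrt)
  then show "real n < lambda_m m"
    unfolding lambda_m_def by simp
  have "real (2 * m\<^sup>2 + 2 * m) < real (4 * (n + 1)\<^sup>2)"
    using assms(2) by (simp only: of_nat_less_iff)
  then have "2 * real m ^ 2 + 2 * real m < (2 * (real n + 1))\<^sup>2"
    by (simp add: power2_eq_square algebra_simps)
  then have "sqrt (2 * real m ^ 2 + 2 * real m) < 2 * (real n + 1)"
    by (intro real_less_lsqrt) simp_all
  then show "lambda_m m < real n + 1"
    unfolding lambda_m_def by simp
qed

lemma ell_m_eq_floorI:
  assumes "4 * n\<^sup>2 < 2 * m\<^sup>2 + 2 * m" and "2 * m\<^sup>2 + 2 * m < 4 * (n + 1)\<^sup>2"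
    and "f_m m (real n) \<le> f_m m (real n + 1)"
  shows "ell_m m = int n"
proof -
  have "\<lfloor>lambda_m m\<rfloor> = int n" and "\<lceil>lambda_m m\<rceil> = int n + 1"
    using lambda_m_between[OF assms(1,2)] by (simp_all add: floor_eq_iff ceiling_eq_iff)
  then show ?thesis
    using assms(3) unfolding ell_m_def Let_def by simp
qed

lemma ell_m_7: "ell_m 7 = 5"
  using ell_m_eq_floorI[of 5 7] by (simp add: f_m_def)

lemma ell_m_10: "ell_m 10 = 7"
  using ell_m_eq_floorI[of 7 10] by (simp add: f_m_def)

lemma ell_m_11: "ell_m 11 = 8"
  using ell_m_eq_floorI[of 8 11] by (simp add: f_m_def)

theorem proposition1p3:
  fixes m :: nat
  assumes "m = 7 \<or> m \<ge> 10"
  shows "ell_m m < (int m - ell_m m) * (int m - ell_m m + 1)"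
proof -
  consider "m \<in> {7, 10, 11}" | "m \<ge> 12"
    using assms by force
  then show ?thesis
  proof cases
    case 1
    then show ?thesis
      by (auto simp: ell_m_7 ell_m_10 ell_m_11)
  next
    case 2
    then show ?thesis
      by (intro less_times_succ_of_linear_bound ell_m_upper_bound) simp
  qed
qed

end
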